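(* Let $1\le p<2$. There are constants $c_0,c_1,c_2>0$ such that for all $n,N\in\mathbb{N}$ with $c_0\sqrt{N}\le n\le c_1N$, $$ e_n^q(S_N,\mathcal{B}_p^N)\ge c_2\, n^{-2/p}N^{2/p-1}. $$
   Context: Throughout, $\log=\log_2$, $\mathbb{N}=\{1,2,\dots\}$, $\mathbb{N}_0=\mathbb{N}\cup\{0\}$, and $\mathbb{Z}[0,N)=\{0,\dots,N-1\}$. Quantum model. Let $D,K$ be nonempty sets, $F$ a nonempty set of functions $D\to K$, $G$ a normed space over $\mathbb{R}$ or $\mathbb{C}$, and $S:F\to G$. Let $H_m=(\mathbb{C}^2)^{\otimes m}$ with canonical basis $|i\rangle$, $i\in\mathbb{Z}[0,2^m)$ (via binary expansion). A quantum query is a tuple $Q=(m,m',m'',Z,\tau,\beta)$ with $m,m',m''\in\mathbb{N}$, $m'+m''\le m$, $\emptyset\ne Z\subseteq\mathbb{Z}[0,2^{m'})$, $\tau:Z\to D$, $\beta:K\to\mathbb{Z}[0,2^{m''})$. For $f\in F$ the unitary $Q_f$ on $H_m=H_{m'}\otimes H_{m''}\otimes H_{m-m'-m''}$ is given on basis states by $Q_f|i\rangle|x\rangle|y\rangle=|i\rangle|x\oplus\beta(f(\tau(i)))\rangle|y\rangle$ if $i\in Z$ and $Q_f|i\rangle|x\rangle|y\rangle=|i\rangle|x\rangle|y\rangle$ otherwise, where $\oplus$ is addition mod $2^{m''}$. A quantum algorithm with no measurement is $(Q,(U_j)_{j=0}^n)$ with $n\in\mathbb{N}_0$ and unitaries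 $U_j$ on $H_{m}$, $m=m(Q)$; it defines $A_f=U_nQ_fU_{n-1}\cdots U_1Q_fU_0$ and uses $n$ queries; $A_f(x,y)$ denotes its matrix entries in the canonical basis. A quantum algorithm from $F$ to $G$ with $k\in\mathbb{N}$ measurements is $A=((A_\ell)_{\ell=0}^{k-1},(b_\ell)_{\ell=0}^{k-1},\varphi)$, where each $A_\ell$ is an algorithm with no measurement on $m_\ell$ qubits, $b_0\in\mathbb{Z}[0,2^{m_0})$, $b_\ell:\prod_{i<\ell}\mathbb{Z}[0,2^{m_i})\to\mathbb{Z}[0,2^{m_\ell})$ for $1\le\ell\le k-1$, and $\varphi:\prod_{\ell<k}\mathbb{Z}[0,2^{m_\ell})\to G$. Its output on $f$ is the probability measure $A(f)$ on $G$ which is the distribution of $\varphi(x_0,\dots,x_{k-1})$, where $(x_0,\dots,x_{k-1})$ has probability $\prod_{\ell=0}^{k-1}|A_{\ell,f}(x_\ell,b_\ell(x_0,\dots,x_{\ell-1}))|^2$ (with $b_0$ a constant). Its number of queries is $n_q(A)=\sum_\ell n_q(A_\ell)$. For a random variable $\zeta$ with distribution $A(f)$, let $e(S,A,f)=\inf\{\varepsilon:\ \mathbf{P}\{\|S(f)-\zeta\|>\varepsilon\}\le 1/4\}$, $e(S,A,F)=\sup_{f\in F}e(S,A,f)$, and the $n$-th minimal query error is $e_n^q(S,F)=\inf\{e(S,A,F): A \text{ a quantum algorithm from } F \text{ to } G \text{ with } n_q(A)\le n\}$. Summation setting. For $N\in\mathbb{N}$, $D=\mathbb{Z}[0,N)$,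 $K=G=\mathbb{R}$. For $1\le p<\infty$, $L_p^N$ is the space of functions $f:\mathbb{Z}[0,N)\to\mathbb{R}$ with norm $\|f\|_{L_p^N}=\big(\frac1N\sum_{i=0}^{N-1}|f(i)|^p\big)^{1/p}$; $\mathcal{B}_p^N=\{f\in L_p^N:\|f\|_{L_p^N}\le 1\}$; and $S_N f=\frac1N\sum_{i=0}^{N-1}f(i)$. *)

theory Defs
  imports "HOL-Analysis.Analysis"
begin

text \<open>Basis states of H_m are indexed by 0..<2^m.  An operator on H_m is
represented by its matrix entries in the canonical basis, as a function
nat => nat => complex (only entries with indices < 2^m are relevant).\<close>

definition unitary_on :: "nat \<Rightarrow> (nat \<Rightarrow> nat \<Rightarrow> complex) \<Rightarrow> bool" where
  "unitary_on m U \<longleftrightarrow>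
     (\<forall>i<2^m. \<forall>j<2^m. (\<Sum>k<2^m. cnj (U k i) * U k j) = (if i = j then 1 else 0))"

definition mmult :: "nat \<Rightarrow> (nat \<Rightarrow> nat \<Rightarrow> complex) \<Rightarrow> (nat \<Rightarrow> nat \<Rightarrow> complex)
    \<Rightarrow> nat \<Rightarrow> nat \<Rightarrow> complex" where
  "mmult m A B x y = (\<Sum>z<2^m. A x z * B z y)"

text \<open>A quantum query Q = (m, m', m'', Z, tau, beta).\<close>
type_synonym ('d, 'k) query = "nat \<times> nat \<times> nat \<times> nat set \<times> (nat \<Rightarrow> 'd) \<times> ('k \<Rightarrow> nat)"

definition query_qubits :: "('d, 'k) query \<Rightarrow> nat" where
  "query_qubits Q = fst Q"

definition valid_query :: "'d set \<Rightarrow> ('d, 'k) query \<Rightarrow> bool" where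
  "valid_query D Q \<longleftrightarrow> (case Q of (m, m', m'', Z, \<tau>, \<beta>) \<Rightarrow>
     1 \<le> m \<and> 1 \<le> m' \<and> 1 \<le> m'' \<and> m' + m'' \<le> m \<and> Z \<noteq> {} \<and> Z \<subseteq> {..<2^m'} \<and>
     (\<forall>i\<in>Z. \<tau> i \<in> D) \<and> (\<forall>k. \<beta> k < 2^m''))"

text \<open>Action of Q_f on basis states: H_m = H_m' (x) H_m'' (x) H_(m-m'-m''), the basis
state |i>|x>|y> having index i*2^(m-m') + x*2^(m-m'-m'') + y.\<close>
definition query_basis :: "('d, 'k) query \<Rightarrow> ('d \<Rightarrow> 'k) \<Rightarrow> nat \<Rightarrow> nat" where
  "query_basis Q f b = (case Q of (m, m', m'', Z, \<tau>, \<beta>) \<Rightarrow>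
     (let r = m - m' - m'';
          i = b div 2^(m'' + r);
          x = (b div 2^r) mod 2^m'';
          y = b mod 2^r
      in if i \<in> Z then i * 2^(m'' + r) + ((x + \<beta> (f (\<tau> i))) mod 2^m'') * 2^r + y
         else b))"

definition query_mat :: "('d, 'k) query \<Rightarrow> ('d \<Rightarrow> 'k) \<Rightarrow> nat \<Rightarrow> nat \<Rightarrow> complex" where
  "query_mat Q f a b = (if a = query_basis Q f b then 1 else 0)"

text \<open>A quantum algorithm with no measurement: (Q, n, U) with unitaries U 0, ..., U n.\<close>
type_synonym ('d, 'k) qalg0 = "('d, 'k) query \<times> nat \<times> (nat \<Rightarrow> nat \<Rightarrow> nat \<Rightarrow> complex)"

definition qalg0_qubits :: "('d, 'k) qalg0 \<Rightarrow> nat" where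
  "qalg0_qubits A = query_qubits (fst A)"

definition qalg0_queries :: "('d, 'k) qalg0 \<Rightarrow> nat" where
  "qalg0_queries A = fst (snd A)"

definition valid_qalg0 :: "'d set \<Rightarrow> ('d, 'k) qalg0 \<Rightarrow> bool" where
  "valid_qalg0 D A \<longleftrightarrow> (case A of (Q, n, U) \<Rightarrow>
     valid_query D Q \<and> (\<forall>j\<le>n. unitary_on (query_qubits Q) (U j)))"

fun alg_prod :: "('d, 'k) query \<Rightarrow> (nat \<Rightarrow> nat \<Rightarrow> nat \<Rightarrow> complex) \<Rightarrow> ('d \<Rightarrow> 'k)
    \<Rightarrow> nat \<Rightarrow> nat \<Rightarrow> nat \<Rightarrow> complex" where
  "alg_prod Q U f 0 = U 0"
| "alg_prod Q U f (Suc j) =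
     mmult (query_qubits Q) (U (Suc j)) (mmult (query_qubits Q) (query_mat Q f) (alg_prod Q U f j))"

definition qalg0_mat :: "('d, 'k) qalg0 \<Rightarrow> ('d \<Rightarrow> 'k) \<Rightarrow> nat \<Rightarrow> nat \<Rightarrow> complex" where
  "qalg0_mat A f = (case A of (Q, n, U) \<Rightarrow> alg_prod Q U f n)"

text \<open>A quantum algorithm with k measurements: ((A_l)_{l<k}, b, phi), where
b l xs is b_l(x_0,...,x_(l-1)) for the list xs of previous outcomes (b 0 [] = b_0).\<close>
type_synonym ('d, 'k, 'g) qalg =
  "('d, 'k) qalg0 list \<times> (nat \<Rightarrow> nat list \<Rightarrow> nat) \<times> (nat list \<Rightarrow> 'g)"

definition qalg_comps :: "('d, 'k, 'g) qalg \<Rightarrow> ('d, 'k) qalg0 list" where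
  "qalg_comps A = fst A"

definition qalg_b :: "('d, 'k, 'g) qalg \<Rightarrow> nat \<Rightarrow> nat list \<Rightarrow> nat" where
  "qalg_b A = fst (snd A)"

definition qalg_phi :: "('d, 'k, 'g) qalg \<Rightarrow> nat list \<Rightarrow> 'g" where
  "qalg_phi A = snd (snd A)"

definition qalg_outcomes :: "('d, 'k, 'g) qalg \<Rightarrow> nat list set" where
  "qalg_outcomes A = {xs. length xs = length (qalg_comps A) \<and>
     (\<forall>l<length xs. xs ! l < 2 ^ qalg0_qubits (qalg_comps A ! l))}"

definition valid_qalg :: "'d set \<Rightarrow> ('d, 'k, 'g) qalg \<Rightarrow> bool" where
  "valid_qalg D A \<longleftrightarrow>
     length (qalg_comps A) \<ge> 1 \<and>
     (\<forall>l<length (qalg_comps A). valid_qalg0 D (qalg_comps A ! l)) \<and>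
     (\<forall>l<length (qalg_comps A). \<forall>xs. length xs = l \<and>
        (\<forall>i<l. xs ! i < 2 ^ qalg0_qubits (qalg_comps A ! i)) \<longrightarrow>
        qalg_b A l xs < 2 ^ qalg0_qubits (qalg_comps A ! l))"

definition qalg_queries :: "('d, 'k, 'g) qalg \<Rightarrow> nat" where
  "qalg_queries A = (\<Sum>l<length (qalg_comps A). qalg0_queries (qalg_comps A ! l))"

definition qalg_prob :: "('d, 'k, 'g) qalg \<Rightarrow> ('d \<Rightarrow> 'k) \<Rightarrow> nat list \<Rightarrow> real" where
  "qalg_prob A f xs = (\<Prod>l<length (qalg_comps A).
     (cmod (qalg0_mat (qalg_comps A ! l) f (xs ! l) (qalg_b A l (take l xs))))\<^sup>2)"

definition qerr_f :: "(('d \<Rightarrow> 'k) \<Rightarrow> 'g::real_normed_vector) \<Rightarrow> ('d, 'k, 'g) qalg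
    \<Rightarrow> ('d \<Rightarrow> 'k) \<Rightarrow> ereal" where
  "qerr_f S A f = Inf {ereal eps | eps.
     (\<Sum>xs\<in>{xs \<in> qalg_outcomes A. norm (S f - qalg_phi A xs) > eps}. qalg_prob A f xs) \<le> 1/4}"

definition qerr :: "(('d \<Rightarrow> 'k) \<Rightarrow> 'g::real_normed_vector) \<Rightarrow> ('d, 'k, 'g) qalg
    \<Rightarrow> ('d \<Rightarrow> 'k) set \<Rightarrow> ereal" where
  "qerr S A F = (SUP f\<in>F. qerr_f S A f)"

definition min_query_error :: "'d set \<Rightarrow> (('d \<Rightarrow> 'k) \<Rightarrow> 'g::real_normed_vector)
    \<Rightarrow> ('d \<Rightarrow> 'k) set \<Rightarrow> nat \<Rightarrow> ereal" where
  "min_query_error D S F n =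
     (INF A\<in>{A :: ('d, 'k, 'g) qalg. valid_qalg D A \<and> qalg_queries A \<le> n}. qerr S A F)"

text \<open>Functions on Z[0,N) are represented as nat => real vanishing outside {..<N}.\<close>
definition Lp_norm :: "nat \<Rightarrow> real \<Rightarrow> (nat \<Rightarrow> real) \<Rightarrow> real" where
  "Lp_norm N p f = ((1 / real N) * (\<Sum>i<N. \<bar>f i\<bar> powr p)) powr (1 / p)"

definition Lp_ball :: "nat \<Rightarrow> real \<Rightarrow> (nat \<Rightarrow> real) set" where
  "Lp_ball N p = {f. (\<forall>i\<ge>N. f i = 0) \<and> Lp_norm N p f \<le> 1}"

definition S_mean :: "nat \<Rightarrow> (nat \<Rightarrow> real) \<Rightarrow> real" where
  "S_mean N f = (1 / real N) * (\<Sum>i<N. f i)"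

end

theory Submission
  imports Defs
begin

text \<open>
  A hybrid argument. Fix \<open>t < N\<close> and put \<open>c = (N / (t + 1)) powr (1 / p)\<close>. The functions
  \<open>c * indicator x\<close> with \<open>card x \<in> {t, t + 1}\<close> lie in the unit ball of \<open>L_p^N\<close>, and adding a
  point \<open>i\<close> to \<open>x\<close> raises the mean by \<open>c / N\<close>. An algorithm with error below \<open>c / (2 N)\<close> on
  all of them therefore tells \<open>f = c * indicator x\<close> from \<open>g = c * indicator (insert i x)\<close>, each
  with probability at least 3/4, so the final states of its runs on \<open>f\<close> and \<open>g\<close> (intermediate
  measurements deferred) have an inner product of modulus at most 7/8.

  On the other hand a query changes this inner product only through the part of the state that
  queries \<open>i\<close>. By the weighted AM-GM inequality, \<open>|\<langle>\<psi>\<^sub>f, \<psi>\<^sub>g\<rangle> - 1| \<le> a m\<^sub>f(i) + m\<^sub>g(i) / a\<close> for every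
  \<open>a > 0\<close>, where \<open>m\<^sub>f(i)\<close> is the total squared amplitude with which the algorithm queries \<open>i\<close>
  on input \<open>f\<close>; and \<open>\<Sum>\<^sub>i m\<^sub>f(i) \<le> n\<close>. Averaging over all pairs \<open>(x, i)\<close> with \<open>card x = t\<close>,
  \<open>i \<notin> x\<close>, and taking \<open>a = (N - t) / (32 n)\<close> gives \<open>3 (N - t) (t + 1) \<le> 1024 n\<^sup>2\<close>. For
  \<open>t \<approx> 1000 n\<^sup>2 / N\<close> this fails, so the error is at least \<open>c / (2 N)\<close>, which is of order
  \<open>n powr (-2/p) * N powr (2/p - 1)\<close>.
\<close>

definition mat_vec :: "nat \<Rightarrow> (nat \<Rightarrow> nat \<Rightarrow> complex) \<Rightarrow> (nat \<Rightarrow> complex) \<Rightarrow> nat \<Rightarrow> complex" where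
  "mat_vec m A u z = (\<Sum>z'<2^m. A z z' * u z')"

definition cinner :: "nat \<Rightarrow> (nat \<Rightarrow> complex) \<Rightarrow> (nat \<Rightarrow> complex) \<Rightarrow> complex" where
  "cinner m u w = (\<Sum>z<2^m. cnj (u z) * w z)"

definition sq_norm :: "nat \<Rightarrow> (nat \<Rightarrow> complex) \<Rightarrow> real" where
  "sq_norm m u = (\<Sum>z<2^m. (cmod (u z))\<^sup>2)"

lemma cnj_mult_self: "cnj z * z = complex_of_real ((cmod z)\<^sup>2)"
  by (metis complex_norm_square of_real_power mult.commute)

lemma cinner_self: "cinner m u u = complex_of_real (sq_norm m u)"
  by (simp add: cinner_def sq_norm_def cnj_mult_self)

lemma cinner_add_left: "cinner m (\<lambda>z. u z + v z) w = cinner m u w + cinner m v w"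
  by (simp add: cinner_def algebra_simps sum.distrib)

lemma cinner_add_right: "cinner m w (\<lambda>z. u z + v z) = cinner m w u + cinner m w v"
  by (simp add: cinner_def algebra_simps sum.distrib)

lemma mat_vec_add: "mat_vec m A (\<lambda>z. u z + w z) = (\<lambda>z. mat_vec m A u z + mat_vec m A w z)"
  by (auto simp: mat_vec_def algebra_simps sum.distrib)

lemma cinner_mat_vec_unitary:
  assumes "unitary_on m U"
  shows "cinner m (mat_vec m U u) (mat_vec m U w) = cinner m u w"
proof -
  have "cinner m (mat_vec m U u) (mat_vec m U w)
      = (\<Sum>z<2^m. \<Sum>a<2^m. \<Sum>b<2^m. cnj (u a) * w b * (cnj (U z a) * U z b))"
    by (simp add: cinner_def mat_vec_def sum_distrib_left sum_distrib_right mult_ac)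
  also have "\<dots> = (\<Sum>a<2^m. \<Sum>b<2^m. \<Sum>z<2^m. cnj (u a) * w b * (cnj (U z a) * U z b))"
    by (subst sum.swap) (intro sum.cong refl sum.swap)
  also have "\<dots> = (\<Sum>a<2^m. \<Sum>b<2^m. cnj (u a) * w b * (\<Sum>z<2^m. cnj (U z a) * U z b))"
    by (simp add: sum_distrib_left)
  also have "\<dots> = (\<Sum>a<2^m. \<Sum>b<2^m. cnj (u a) * w b * (if a = b then 1 else 0))"
    using assms unfolding unitary_on_def by (intro sum.cong) auto
  also have "\<dots> = cinner m u w"
    by (simp add: cinner_def if_distrib cong: if_cong)
  finally show ?thesis .
qed

lemma sq_norm_mat_vec_unitary:
  assumes "unitary_on m U"
  shows "sq_norm m (mat_vec m U u) = sq_norm m u"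
  using cinner_mat_vec_unitary[OF assms, of u u] by (simp add: cinner_self)

lemma mult_le_weighted_am_gm:
  fixes x y a :: real
  assumes "a > 0"
  shows "x * y \<le> (a * x\<^sup>2 + y\<^sup>2 / a) / 2"
proof -
  have "0 \<le> (a * x - y)\<^sup>2 / a" using assms by simp
  also have "\<dots> = a * x\<^sup>2 - 2 * x * y + y\<^sup>2 / a"
    using assms by (simp add: power2_eq_square field_simps)
  finally show ?thesis by simp
qed

lemma norm_weighted_cinner_le:
  assumes "a > 0"
  shows "cmod (cnj \<alpha> * \<beta> * cinner m s t)
    \<le> (a * (cmod \<alpha>)\<^sup>2 * sq_norm m s + (cmod \<beta>)\<^sup>2 * sq_norm m t / a) / 2"
proof -
  have "cmod (cnj \<alpha> * \<beta> * cinner m s t) \<le> (\<Sum>z<2^m. (cmod \<alpha> * cmod (s z)) * (cmod \<beta> * cmod (t z)))"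
    unfolding cinner_def sum_distrib_left
    by (rule order_trans[OF norm_sum]) (simp add: norm_mult algebra_simps)
  also have "\<dots> \<le> (\<Sum>z<2^m. (a * (cmod \<alpha> * cmod (s z))\<^sup>2 + (cmod \<beta> * cmod (t z))\<^sup>2 / a) / 2)"
    by (intro sum_mono mult_le_weighted_am_gm assms)
  also have "\<dots> = (a * (cmod \<alpha>)\<^sup>2 * sq_norm m s + (cmod \<beta>)\<^sup>2 * sq_norm m t / a) / 2"
    by (simp add: sq_norm_def power_mult_distrib sum_divide_distrib sum.distrib sum_distrib_left
        mult.assoc add_divide_distrib)
  finally show ?thesis .
qed

section \<open>The oracle permutes the basis\<close>

lemma mixed_radix_digits:
  fixes i x y c d :: nat
  assumes "x < d" "y < c"
  shows "(i * (d * c) + x * c + y) div (d * c) = i"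
    and "(i * (d * c) + x * c + y) div c mod d = x"
    and "(i * (d * c) + x * c + y) mod c = y"
proof -
  have eq: "i * (d * c) + x * c + y = (i * d + x) * c + y"
    by (simp add: algebra_simps)
  have div_c: "(i * (d * c) + x * c + y) div c = i * d + x"
    unfolding eq using assms by simp
  show "(i * (d * c) + x * c + y) div (d * c) = i"
    using assms by (simp add: div_mult2_eq[of _ c d, simplified mult.commute[of c d]] div_c)
  show "(i * (d * c) + x * c + y) div c mod d = x"
    using assms by (simp add: div_c)
  show "(i * (d * c) + x * c + y) mod c = y"
    unfolding eq using assms by simp
qed

lemma mixed_radix_less:
  fixes i k x y c d :: nat
  assumes "x < d" "y < c" "i < k"
  shows "i * (d * c) + x * c + y < k * (d * c)"
proof -
  have "x * c + y < Suc x * c" using assms(2) by simp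
  also have "\<dots> \<le> d * c" using assms(1) by (intro mult_le_mono1) simp
  finally have "i * (d * c) + x * c + y < Suc i * (d * c)" by simp
  also have "\<dots> \<le> k * (d * c)" using assms(3) by (intro mult_le_mono1) simp
  finally show ?thesis .
qed

lemma mixed_radix_decomp:
  fixes b c d :: nat
  shows "b = b div (d * c) * (d * c) + b div c mod d * c + b mod c"
proof -
  have "b = b div c * c + b mod c" by simp
  also have "b div c = b div c div d * d + b div c mod d" by simp
  also have "b div c div d = b div (d * c)" by (simp add: div_mult2_eq mult.commute)
  finally show ?thesis by (simp add: algebra_simps)
qed

lemma mod_add_right_cancel_nat:
  fixes x y k d :: nat
  assumes "(x + k) mod d = (y + k) mod d"
  shows "x mod d = y mod d"
proof -
  have "(int x + int k) mod int d = (int y + int k) mod int d"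
    using assms by (metis of_nat_add zmod_int)
  then have "(int x + int k - int k) mod int d = (int y + int k - int k) mod int d"
    by (metis mod_diff_left_eq)
  then show ?thesis
    by (simp add: zmod_int[symmetric])
qed

lemma query_basis_eq:
  assumes "Q = (m, m', m'', Z, \<tau>, \<beta>)" "c = 2^(m - m' - m'')" "d = 2^m''"
  shows "query_basis Q f b =
    (if b div (d * c) \<in> Z
     then b div (d * c) * (d * c)
          + ((b div c mod d + \<beta> (f (\<tau> (b div (d * c))))) mod d) * c + b mod c
     else b)"
  using assms by (simp add: query_basis_def power_add Let_def mult.commute)

lemma query_basis_div:
  assumes "Q = (m, m', m'', Z, \<tau>, \<beta>)" "c = 2^(m - m' - m'')" "d = 2^m''"
  shows "query_basis Q f b div (d * c) = b div (d * c)"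
  using assms(2,3) by (simp add: query_basis_eq[OF assms] mixed_radix_digits)

lemma query_basis_less:
  assumes "valid_query D Q" "b < 2 ^ query_qubits Q"
  shows "query_basis Q f b < 2 ^ query_qubits Q"
proof -
  obtain m m' m'' Z \<tau> \<beta> where Q: "Q = (m, m', m'', Z, \<tau>, \<beta>)" by (cases Q) auto
  define c :: nat where "c = 2^(m - m' - m'')"
  define d :: nat where "d = 2^m''"
  have valid: "m' + m'' \<le> m" "Z \<subseteq> {..<2^m'}" using assms(1) by (auto simp: valid_query_def Q)
  have "(2::nat)^m = 2^m' * (d * c)"
    unfolding c_def d_def power_add[symmetric] using valid by simp
  moreover have "c > 0" "d > 0" by (auto simp: c_def d_def)
  moreover have "b div (d * c) \<in> Z \<Longrightarrow> b div (d * c) < 2^m'" using valid by auto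
  moreover have "query_qubits Q = m" by (simp add: query_qubits_def Q)
  ultimately show ?thesis
    using assms(2) mixed_radix_less[of _ d "b mod c" c "b div (d * c)" "2^m'"]
    unfolding query_basis_eq[OF Q c_def d_def] by auto
qed

lemma inj_query_basis: "inj (query_basis Q f)"
proof (rule injI)
  fix b b' assume eq: "query_basis Q f b = query_basis Q f b'"
  obtain m m' m'' Z \<tau> \<beta> where Q: "Q = (m, m', m'', Z, \<tau>, \<beta>)" by (cases Q) auto
  define c :: nat where "c = 2^(m - m' - m'')"
  define d :: nat where "d = 2^m''"
  have pos: "c > 0" "d > 0" by (auto simp: c_def d_def)
  note basis = query_basis_eq[OF Q c_def d_def]
  have same_block: "b div (d * c) = b' div (d * c)"
    using eq query_basis_div[OF Q c_def d_def] by metis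
  show "b = b'"
  proof (cases "b div (d * c) \<in> Z")
    case False
    then show ?thesis using eq same_block unfolding basis by simp
  next
    case True
    define k where "k = \<beta> (f (\<tau> (b div (d * c))))"
    have "b div (d * c) * (d * c) + (b div c mod d + k) mod d * c + b mod c =
          b div (d * c) * (d * c) + (b' div c mod d + k) mod d * c + b' mod c"
      using eq True same_block unfolding basis k_def by simp
    then have low: "b mod c = b' mod c"
      and mid: "(b div c mod d + k) mod d = (b' div c mod d + k) mod d"
      using mixed_radix_digits(2,3)[of _ d _ c "b div (d * c)"] pos by (metis mod_less_divisor)+
    then have "b div c mod d = b' div c mod d"
      using mod_add_right_cancel_nat[of "b div c mod d" k d "b' div c mod d"] by simp
    then show ?thesis
      using low same_block mixed_radix_decomp[of b d c] mixed_radix_decomp[of b' d c] by metis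
  qed
qed

lemma query_mat_unitary:
  assumes "valid_query D Q"
  shows "unitary_on (query_qubits Q) (query_mat Q f)"
  unfolding unitary_on_def
proof (intro allI impI)
  fix i j :: nat assume ij: "i < 2 ^ query_qubits Q" "j < 2 ^ query_qubits Q"
  have "(\<Sum>k<2 ^ query_qubits Q. cnj (query_mat Q f k i) * query_mat Q f k j)
      = (\<Sum>k<2 ^ query_qubits Q. if k = query_basis Q f i
           then (if query_basis Q f i = query_basis Q f j then 1 else 0) else 0)"
    by (intro sum.cong) (auto simp: query_mat_def)
  also have "\<dots> = (if query_basis Q f i = query_basis Q f j then 1 else 0)"
    using query_basis_less[OF assms ij(1)] by simp
  also have "\<dots> = (if i = j then 1 else 0)"
    using inj_query_basis[of Q f] by (auto dest: injD)
  finally show "(\<Sum>k<2 ^ query_qubits Q. cnj (query_mat Q f k i) * query_mat Q f k j)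
      = (if i = j then 1 else 0)" .
qed

section \<open>A query depends on one value of the input\<close>

definition query_apply :: "('d, 'k) query \<Rightarrow> ('d \<Rightarrow> 'k) \<Rightarrow> (nat \<Rightarrow> complex) \<Rightarrow> nat \<Rightarrow> complex" where
  "query_apply Q f = mat_vec (query_qubits Q) (query_mat Q f)"

text \<open>\<open>2^m'' * 2^(m - m' - m'')\<close> is the dimension of the last two registers, so the quotient is the
  index register of the basis state.\<close>

definition queries_at :: "('d, 'k) query \<Rightarrow> 'd \<Rightarrow> nat \<Rightarrow> bool" where
  "queries_at Q pos b \<longleftrightarrow> (case Q of (m, m', m'', Z, \<tau>, \<beta>) \<Rightarrow>
     b div (2^m'' * 2^(m - m' - m'')) \<in> Z \<and> \<tau> (b div (2^m'' * 2^(m - m' - m''))) = pos)"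

definition restrict_vec :: "(nat \<Rightarrow> bool) \<Rightarrow> (nat \<Rightarrow> complex) \<Rightarrow> nat \<Rightarrow> complex" where
  "restrict_vec P u z = (if P z then u z else 0)"

lemma query_basis_cong:
  assumes "\<forall>x. x \<noteq> pos \<longrightarrow> f x = g x" "\<not> queries_at Q pos b"
  shows "query_basis Q f b = query_basis Q g b"
proof -
  obtain m m' m'' Z \<tau> \<beta> where Q: "Q = (m, m', m'', Z, \<tau>, \<beta>)" by (cases Q) auto
  show ?thesis
    using assms unfolding query_basis_eq[OF Q refl refl] by (auto simp: queries_at_def Q)
qed

lemma query_apply_cong:
  assumes "\<forall>x. x \<noteq> pos \<longrightarrow> f x = g x" "\<forall>z. queries_at Q pos z \<longrightarrow> u z = 0"
  shows "query_apply Q f u = query_apply Q g u"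
proof
  fix z
  show "query_apply Q f u z = query_apply Q g u z"
    unfolding query_apply_def mat_vec_def
  proof (rule sum.cong[OF refl])
    fix b
    show "query_mat Q f z b * u b = query_mat Q g z b * u b"
      using assms(2) query_basis_cong[OF assms(1), of Q b]
      by (cases "queries_at Q pos b") (auto simp: query_mat_def)
  qed
qed

lemma sum_sq_norm_restrict_le:
  assumes "finite S" and unique: "\<And>z i j. i \<in> S \<Longrightarrow> j \<in> S \<Longrightarrow> P i z \<Longrightarrow> P j z \<Longrightarrow> i = j"
  shows "(\<Sum>i\<in>S. sq_norm m (restrict_vec (P i) u)) \<le> sq_norm m u"
proof -
  have "(\<Sum>i\<in>S. sq_norm m (restrict_vec (P i) u))
      = (\<Sum>z<2^m. \<Sum>i\<in>S. if P i z then (cmod (u z))\<^sup>2 else 0)"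
    unfolding sq_norm_def restrict_vec_def by (subst sum.swap) (intro sum.cong refl; simp)
  also have "\<dots> = (\<Sum>z<2^m. \<Sum>i\<in>{i \<in> S. P i z}. (cmod (u z))\<^sup>2)"
    by (simp only: sum.inter_filter[OF assms(1)])
  also have "\<dots> \<le> (\<Sum>z<2^m. (cmod (u z))\<^sup>2)"
  proof (rule sum_mono)
    fix z
    have "card {i \<in> S. P i z} \<le> 1"
      using unique by (auto simp: card_le_Suc0_iff_eq assms(1))
    then show "(\<Sum>i\<in>{i \<in> S. P i z}. (cmod (u z))\<^sup>2) \<le> (cmod (u z))\<^sup>2"
      by (simp add: mult_left_le_one_le)
  qed
  finally show ?thesis by (simp add: sq_norm_def)
qed

lemma sum_sq_norm_restrict_queries_le:
  "finite S \<Longrightarrow> (\<Sum>pos\<in>S. sq_norm m (restrict_vec (queries_at Q pos) u)) \<le> sq_norm m u"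
  by (rule sum_sq_norm_restrict_le) (cases Q, auto simp: queries_at_def)

lemma cinner_query_apply:
  assumes "valid_query D Q"
  shows "cinner (query_qubits Q) (query_apply Q f s) (query_apply Q f t)
    = cinner (query_qubits Q) s t"
  unfolding query_apply_def by (rule cinner_mat_vec_unitary[OF query_mat_unitary[OF assms]])

lemma sq_norm_query_apply:
  assumes "valid_query D Q"
  shows "sq_norm (query_qubits Q) (query_apply Q f u) = sq_norm (query_qubits Q) u"
  using cinner_query_apply[OF assms, of f u u] by (simp add: cinner_self)

lemma cinner_query_apply_diff:
  assumes "\<forall>x. x \<noteq> pos \<longrightarrow> f x = g x" "valid_query D Q"
  defines "m \<equiv> query_qubits Q" and "P \<equiv> restrict_vec (queries_at Q pos)"
  shows "cinner m (query_apply Q f u) (query_apply Q g w) - cinner m u w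
       = cinner m (query_apply Q f (P u)) (query_apply Q g (P w)) - cinner m (P u) (P w)"
proof -
  define P' where "P' = restrict_vec (\<lambda>z. \<not> queries_at Q pos z)"
  note preserves = cinner_query_apply[OF assms(2), folded m_def]
  have split: "v = (\<lambda>z. P v z + P' v z)" for v
    by (auto simp: P_def P'_def restrict_vec_def)
  have same: "query_apply Q f (P' v) = query_apply Q g (P' v)" for v
    using query_apply_cong[OF assms(1)] by (simp add: P'_def restrict_vec_def)
  have orth: "cinner m (P s) (P' t) = 0" "cinner m (P' s) (P t) = 0" for s t
    by (auto simp: cinner_def P_def P'_def restrict_vec_def intro!: sum.neutral)
  have add: "query_apply Q h (\<lambda>z. s z + t z) = (\<lambda>z. query_apply Q h s z + query_apply Q h t z)"
    for h s t
    by (simp add: query_apply_def mat_vec_add)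
  have cross: "cinner m (query_apply Q f (P u)) (query_apply Q g (P' w)) = 0"
    "cinner m (query_apply Q f (P' u)) (query_apply Q g (P w)) = 0"
    by (simp only: same[symmetric] preserves orth, simp only: same preserves orth)
  have diag: "cinner m (query_apply Q f (P' u)) (query_apply Q g (P' w)) = cinner m (P' u) (P' w)"
    by (simp only: same preserves)
  have "cinner m (query_apply Q f u) (query_apply Q g w)
      = cinner m (query_apply Q f (P u)) (query_apply Q g (P w)) + cinner m (P' u) (P' w)"
    by (subst (1) split[of u], subst split[of w])
      (simp add: add cinner_add_left cinner_add_right cross diag)
  moreover have "cinner m u w = cinner m (P u) (P w) + cinner m (P' u) (P' w)"
    by (subst (1) split[of u], subst split[of w]) (simp add: cinner_add_left cinner_add_right orth)
  ultimately show ?thesis by simp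
qed

lemma norm_weighted_cinner_query_apply_diff_le:
  assumes "valid_query D Q" "a > 0"
  defines "m \<equiv> query_qubits Q"
  shows "cmod (cnj \<alpha> * \<beta> * (cinner m (query_apply Q f s) (query_apply Q g t) - cinner m s t))
    \<le> a * (cmod \<alpha>)\<^sup>2 * sq_norm m s + (cmod \<beta>)\<^sup>2 * sq_norm m t / a"
proof -
  let ?k = "cnj \<alpha> * \<beta>"
  have "cmod (?k * (cinner m (query_apply Q f s) (query_apply Q g t) - cinner m s t))
      \<le> cmod (?k * cinner m (query_apply Q f s) (query_apply Q g t)) + cmod (?k * cinner m s t)"
    unfolding right_diff_distrib by (rule norm_triangle_ineq4)
  also have "\<dots> \<le> (a * (cmod \<alpha>)\<^sup>2 * sq_norm m (query_apply Q f s)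
          + (cmod \<beta>)\<^sup>2 * sq_norm m (query_apply Q g t) / a) / 2
      + (a * (cmod \<alpha>)\<^sup>2 * sq_norm m s + (cmod \<beta>)\<^sup>2 * sq_norm m t / a) / 2"
    by (intro add_mono norm_weighted_cinner_le assms(2))
  also have "\<dots> = a * (cmod \<alpha>)\<^sup>2 * sq_norm m s + (cmod \<beta>)\<^sup>2 * sq_norm m t / a"
    unfolding m_def sq_norm_query_apply[OF assms(1)] by (rule field_sum_of_halves)
  finally show ?thesis .
qed

definition qalg0_query :: "('d, 'k) qalg0 \<Rightarrow> ('d, 'k) query" where
  "qalg0_query C = fst C"

definition qalg0_unitary :: "('d, 'k) qalg0 \<Rightarrow> nat \<Rightarrow> nat \<Rightarrow> nat \<Rightarrow> complex" where
  "qalg0_unitary C = snd (snd C)"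

definition qalg0_state :: "('d, 'k) qalg0 \<Rightarrow> ('d \<Rightarrow> 'k) \<Rightarrow> nat \<Rightarrow> nat \<Rightarrow> nat \<Rightarrow> complex" where
  "qalg0_state C f c j z = alg_prod (qalg0_query C) (qalg0_unitary C) f j z c"

lemma qalg0_qubits_eq: "qalg0_qubits C = query_qubits (qalg0_query C)"
  by (simp add: qalg0_qubits_def qalg0_query_def)

lemma valid_qalg0D:
  assumes "valid_qalg0 D C"
  shows "valid_query D (qalg0_query C)"
    and "j \<le> qalg0_queries C \<Longrightarrow> unitary_on (qalg0_qubits C) (qalg0_unitary C j)"
  using assms by (auto simp: valid_qalg0_def qalg0_query_def qalg0_unitary_def qalg0_queries_def
      qalg0_qubits_def split: prod.splits)

lemma qalg0_state_Suc:
  "qalg0_state C f c (Suc j) = mat_vec (qalg0_qubits C) (qalg0_unitary C (Suc j))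
     (query_apply (qalg0_query C) f (qalg0_state C f c j))"
  by (auto simp: qalg0_state_def query_apply_def mat_vec_def mmult_def qalg0_qubits_eq)

lemma qalg0_mat_eq_state: "qalg0_mat C f z c = qalg0_state C f c (qalg0_queries C) z"
  by (cases C) (simp add: qalg0_mat_def qalg0_state_def qalg0_query_def qalg0_unitary_def
      qalg0_queries_def)

lemma cinner_qalg0_state_0:
  assumes "valid_qalg0 D C" "c < 2 ^ qalg0_qubits C"
  shows "cinner (qalg0_qubits C) (qalg0_state C f c 0) (qalg0_state C g c 0) = 1"
  using valid_qalg0D(2)[OF assms(1), of 0] assms(2)
  by (simp add: unitary_on_def cinner_def qalg0_state_def)

lemma sq_norm_qalg0_state:
  assumes "valid_qalg0 D C" "c < 2 ^ qalg0_qubits C" "j \<le> qalg0_queries C"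
  shows "sq_norm (qalg0_qubits C) (qalg0_state C f c j) = 1"
  using assms(3)
proof (induction j)
  case 0
  then show ?case
    using cinner_qalg0_state_0[OF assms(1,2), of f f] by (simp add: cinner_self)
next
  case (Suc j)
  then show ?case
    using valid_qalg0D(2)[OF assms(1) Suc.prems]
      sq_norm_query_apply[OF valid_qalg0D(1)[OF assms(1)]]
    by (simp add: qalg0_state_Suc sq_norm_mat_vec_unitary qalg0_qubits_eq)
qed

lemma cinner_qalg0_state_sub_1:
  assumes valid: "valid_qalg0 D C" and "c < 2 ^ qalg0_qubits C" "j \<le> qalg0_queries C"
    and agree: "\<forall>x. x \<noteq> pos \<longrightarrow> f x = g x"
  defines "m \<equiv> qalg0_qubits C" and "Q \<equiv> qalg0_query C"
    and "P \<equiv> restrict_vec (queries_at (qalg0_query C) pos)" and "\<psi> \<equiv> qalg0_state C"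
  shows "cinner m (\<psi> f c j) (\<psi> g c j) - 1 =
    (\<Sum>i<j. cinner m (query_apply Q f (P (\<psi> f c i))) (query_apply Q g (P (\<psi> g c i)))
           - cinner m (P (\<psi> f c i)) (P (\<psi> g c i)))"
  using assms(3)
proof (induction j)
  case 0
  then show ?case
    using cinner_qalg0_state_0[OF valid assms(2)] by (simp add: m_def \<psi>_def)
next
  case (Suc j)
  have "cinner m (\<psi> f c (Suc j)) (\<psi> g c (Suc j))
      = cinner m (query_apply Q f (\<psi> f c j)) (query_apply Q g (\<psi> g c j))"
    using valid_qalg0D(2)[OF valid Suc.prems]
    by (simp add: qalg0_state_Suc cinner_mat_vec_unitary m_def Q_def \<psi>_def)
  also have "\<dots> = cinner m (\<psi> f c j) (\<psi> g c j)
      + (cinner m (query_apply Q f (P (\<psi> f c j))) (query_apply Q g (P (\<psi> g c j)))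
         - cinner m (P (\<psi> f c j)) (P (\<psi> g c j)))"
    using cinner_query_apply_diff[OF agree valid_qalg0D(1)[OF valid]]
    by (simp add: m_def Q_def P_def qalg0_qubits_eq algebra_simps)
  finally show ?case
    using Suc by (simp add: algebra_simps)
qed

text \<open>The query magnitude at \<open>pos\<close> of Bennett, Bernstein, Brassard and Vazirani.\<close>

definition qalg0_query_mass :: "('d, 'k) qalg0 \<Rightarrow> ('d \<Rightarrow> 'k) \<Rightarrow> 'd \<Rightarrow> nat \<Rightarrow> real" where
  "qalg0_query_mass C f pos c = (\<Sum>i<qalg0_queries C. sq_norm (qalg0_qubits C)
     (restrict_vec (queries_at (qalg0_query C) pos) (qalg0_state C f c i)))"

lemma norm_weighted_cinner_qalg0_state_sub_1_le:
  assumes valid: "valid_qalg0 D C" and c: "c < 2 ^ qalg0_qubits C"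
    and agree: "\<forall>x. x \<noteq> pos \<longrightarrow> f x = g x" and a: "a > 0"
  defines "m \<equiv> qalg0_qubits C" and "n \<equiv> qalg0_queries C"
  shows "cmod (cnj \<alpha> * \<beta> * (cinner m (qalg0_state C f c n) (qalg0_state C g c n) - 1))
    \<le> a * (cmod \<alpha>)\<^sup>2 * qalg0_query_mass C f pos c + (cmod \<beta>)\<^sup>2 * qalg0_query_mass C g pos c / a"
proof -
  let ?Q = "qalg0_query C" and ?P = "restrict_vec (queries_at (qalg0_query C) pos)"
  let ?\<psi> = "qalg0_state C"
  have telescope: "cnj \<alpha> * \<beta> * (cinner m (?\<psi> f c n) (?\<psi> g c n) - 1)
      = (\<Sum>i<n. cnj \<alpha> * \<beta> *
          (cinner m (query_apply ?Q f (?P (?\<psi> f c i))) (query_apply ?Q g (?P (?\<psi> g c i)))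
           - cinner m (?P (?\<psi> f c i)) (?P (?\<psi> g c i))))"
    unfolding m_def n_def cinner_qalg0_state_sub_1[OF valid c order_refl agree]
    by (simp add: sum_distrib_left)
  have "cmod (cnj \<alpha> * \<beta> * (cinner m (?\<psi> f c n) (?\<psi> g c n) - 1))
      \<le> (\<Sum>i<n. a * (cmod \<alpha>)\<^sup>2 * sq_norm m (?P (?\<psi> f c i))
                  + (cmod \<beta>)\<^sup>2 * sq_norm m (?P (?\<psi> g c i)) / a)"
    unfolding telescope
    using norm_weighted_cinner_query_apply_diff_le[OF valid_qalg0D(1)[OF valid] a]
    by (intro order_trans[OF norm_sum sum_mono]) (simp add: m_def qalg0_qubits_eq)
  also have "\<dots> = a * (cmod \<alpha>)\<^sup>2 * qalg0_query_mass C f pos c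
      + (cmod \<beta>)\<^sup>2 * qalg0_query_mass C g pos c / a"
    by (simp add: qalg0_query_mass_def m_def n_def sum.distrib sum_distrib_left sum_divide_distrib)
  finally show ?thesis .
qed

lemma sum_qalg0_query_mass_le:
  assumes "valid_qalg0 D C" "c < 2 ^ qalg0_qubits C" "finite S"
  shows "(\<Sum>pos\<in>S. qalg0_query_mass C f pos c) \<le> real (qalg0_queries C)"
proof -
  have "(\<Sum>pos\<in>S. qalg0_query_mass C f pos c) = (\<Sum>i<qalg0_queries C. \<Sum>pos\<in>S.
      sq_norm (qalg0_qubits C)
        (restrict_vec (queries_at (qalg0_query C) pos) (qalg0_state C f c i)))"
    unfolding qalg0_query_mass_def by (rule sum.swap)
  also have "\<dots> \<le> (\<Sum>i<qalg0_queries C. sq_norm (qalg0_qubits C) (qalg0_state C f c i))"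
    by (intro sum_mono sum_sq_norm_restrict_queries_le assms(3))
  also have "\<dots> = real (qalg0_queries C)"
    using sq_norm_qalg0_state[OF assms(1,2)] by simp
  finally show ?thesis .
qed

section \<open>Runs with intermediate measurements\<close>

definition outcome_prefixes :: "('d, 'k, 'g) qalg \<Rightarrow> nat \<Rightarrow> nat list set" where
  "outcome_prefixes A l =
     {xs. length xs = l \<and> (\<forall>i<l. xs ! i < 2 ^ qalg0_qubits (qalg_comps A ! i))}"

definition path_amp :: "('d, 'k, 'g) qalg \<Rightarrow> ('d \<Rightarrow> 'k) \<Rightarrow> nat list \<Rightarrow> complex" where
  "path_amp A f xs =
     (\<Prod>i<length xs. qalg0_mat (qalg_comps A ! i) f (xs ! i) (qalg_b A i (take i xs)))"

text \<open>With the intermediate measurements deferred, \<open>overlap A f g l\<close> is the inner product of the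
  states reached on \<open>f\<close> and on \<open>g\<close> after \<open>l\<close> rounds: the branches of different outcome sequences
  are orthogonal, and \<open>path_amp A f xs\<close> is the amplitude of the branch \<open>xs\<close>.\<close>

definition overlap :: "('d, 'k, 'g) qalg \<Rightarrow> ('d \<Rightarrow> 'k) \<Rightarrow> ('d \<Rightarrow> 'k) \<Rightarrow> nat \<Rightarrow> complex" where
  "overlap A f g l = (\<Sum>xs\<in>outcome_prefixes A l. cnj (path_amp A f xs) * path_amp A g xs)"

lemma outcome_prefixes_0: "outcome_prefixes A 0 = {[]}"
  by (auto simp: outcome_prefixes_def)

lemma outcome_prefixes_Suc:
  "outcome_prefixes A (Suc l) =
     (\<lambda>(xs, x). xs @ [x]) ` (outcome_prefixes A l \<times> {..<2 ^ qalg0_qubits (qalg_comps A ! l)})"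
proof (intro set_eqI iffI)
  fix ys assume ys: "ys \<in> outcome_prefixes A (Suc l)"
  then have "ys \<noteq> []" by (auto simp: outcome_prefixes_def)
  then obtain xs x where ys_eq: "ys = xs @ [x]" by (metis rev_exhaust)
  have len: "length xs = l"
    and digits: "\<forall>i<Suc l. (xs @ [x]) ! i < 2 ^ qalg0_qubits (qalg_comps A ! i)"
    using ys unfolding ys_eq outcome_prefixes_def by simp_all
  have "xs ! i < 2 ^ qalg0_qubits (qalg_comps A ! i)" if "i < l" for i
    using digits[rule_format, of i] that len by (simp add: nth_append)
  then have "xs \<in> outcome_prefixes A l"
    using len by (simp add: outcome_prefixes_def)
  moreover have "x < 2 ^ qalg0_qubits (qalg_comps A ! l)"
    using len digits by (metis lessI nth_append_length)
  ultimately show "ys \<in> (\<lambda>(xs, x). xs @ [x]) `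
      (outcome_prefixes A l \<times> {..<2 ^ qalg0_qubits (qalg_comps A ! l)})"
    using ys_eq by auto
next
  fix ys assume "ys \<in> (\<lambda>(xs, x). xs @ [x]) `
      (outcome_prefixes A l \<times> {..<2 ^ qalg0_qubits (qalg_comps A ! l)})"
  then show "ys \<in> outcome_prefixes A (Suc l)"
    by (auto simp: outcome_prefixes_def nth_append less_Suc_eq)
qed

lemma finite_outcome_prefixes: "finite (outcome_prefixes A l)"
  by (induction l) (simp_all add: outcome_prefixes_0 outcome_prefixes_Suc)

lemma path_amp_snoc:
  "path_amp A f (xs @ [x])
    = path_amp A f xs * qalg0_mat (qalg_comps A ! length xs) f x (qalg_b A (length xs) xs)"
proof -
  have "(\<Prod>i<length xs.
      qalg0_mat (qalg_comps A ! i) f ((xs @ [x]) ! i) (qalg_b A i (take i (xs @ [x]))))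
      = path_amp A f xs"
    unfolding path_amp_def by (intro prod.cong refl) (simp add: nth_append)
  then show ?thesis by (simp add: path_amp_def)
qed

lemma overlap_0: "overlap A f g 0 = 1"
  by (simp add: overlap_def outcome_prefixes_0 path_amp_def)

lemma overlap_Suc:
  assumes "qalg_comps A ! l = C"
  shows "overlap A f g (Suc l) = (\<Sum>xs\<in>outcome_prefixes A l.
      cnj (path_amp A f xs) * path_amp A g xs *
      cinner (qalg0_qubits C) (qalg0_state C f (qalg_b A l xs) (qalg0_queries C))
        (qalg0_state C g (qalg_b A l xs) (qalg0_queries C)))"
proof -
  have inj: "inj_on (\<lambda>(xs, x). xs @ [x]) X" for X :: "(nat list \<times> nat) set"
    by (auto simp: inj_on_def)
  have "overlap A f g (Suc l) = (\<Sum>(xs, x)\<in>outcome_prefixes A l \<times> {..<2 ^ qalg0_qubits C}.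
      cnj (path_amp A f (xs @ [x])) * path_amp A g (xs @ [x]))"
    unfolding overlap_def outcome_prefixes_Suc assms
    by (subst sum.reindex[OF inj]) (simp add: case_prod_beta')
  also have "\<dots> = (\<Sum>xs\<in>outcome_prefixes A l. \<Sum>x<2 ^ qalg0_qubits C.
      cnj (path_amp A f (xs @ [x])) * path_amp A g (xs @ [x]))"
    by (rule sum.cartesian_product[symmetric])
  also have "\<dots> = (\<Sum>xs\<in>outcome_prefixes A l. cnj (path_amp A f xs) * path_amp A g xs *
      cinner (qalg0_qubits C) (qalg0_state C f (qalg_b A l xs) (qalg0_queries C))
        (qalg0_state C g (qalg_b A l xs) (qalg0_queries C)))"
  proof (intro sum.cong refl)
    fix xs assume "xs \<in> outcome_prefixes A l"
    then have len: "length xs = l" by (simp add: outcome_prefixes_def)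
    show "(\<Sum>x<2 ^ qalg0_qubits C. cnj (path_amp A f (xs @ [x])) * path_amp A g (xs @ [x]))
      = cnj (path_amp A f xs) * path_amp A g xs *
        cinner (qalg0_qubits C) (qalg0_state C f (qalg_b A l xs) (qalg0_queries C))
          (qalg0_state C g (qalg_b A l xs) (qalg0_queries C))"
      unfolding cinner_def sum_distrib_left
    proof (intro sum.cong refl)
      fix x
      show "cnj (path_amp A f (xs @ [x])) * path_amp A g (xs @ [x])
        = cnj (path_amp A f xs) * path_amp A g xs *
          (cnj (qalg0_state C f (qalg_b A l xs) (qalg0_queries C) x)
            * qalg0_state C g (qalg_b A l xs) (qalg0_queries C) x)"
        by (simp add: path_amp_snoc len assms qalg0_mat_eq_state mult.assoc mult.left_commute)
    qed
  qed
  finally show ?thesis .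
qed

lemma valid_qalgD:
  assumes "valid_qalg D A" "l < length (qalg_comps A)"
  shows "valid_qalg0 D (qalg_comps A ! l)"
    and "xs \<in> outcome_prefixes A l \<Longrightarrow> qalg_b A l xs < 2 ^ qalg0_qubits (qalg_comps A ! l)"
  using assms by (auto simp: valid_qalg_def outcome_prefixes_def)

lemma overlap_self_eq:
  "overlap A f f l = complex_of_real (\<Sum>xs\<in>outcome_prefixes A l. (cmod (path_amp A f xs))\<^sup>2)"
  by (simp add: overlap_def cnj_mult_self)

lemma overlap_self:
  assumes "valid_qalg D A" "l \<le> length (qalg_comps A)"
  shows "overlap A f f l = 1"
  using assms(2)
proof (induction l)
  case 0
  then show ?case by (simp add: overlap_0)
next
  case (Suc l)
  then have l: "l < length (qalg_comps A)" by simp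
  have "overlap A f f (Suc l) = overlap A f f l"
    using sq_norm_qalg0_state[OF valid_qalgD(1)[OF assms(1) l]] valid_qalgD(2)[OF assms(1) l]
    by (subst overlap_Suc[OF refl]) (simp add: cinner_self overlap_def)
  then show ?case using Suc by simp
qed

lemma sum_sq_path_amp:
  assumes "valid_qalg D A" "l \<le> length (qalg_comps A)"
  shows "(\<Sum>xs\<in>outcome_prefixes A l. (cmod (path_amp A f xs))\<^sup>2) = 1"
  using overlap_self[OF assms, of f] overlap_self_eq[of A f l] by (metis of_real_eq_1_iff)

lemma qalg_outcomes_eq: "qalg_outcomes A = outcome_prefixes A (length (qalg_comps A))"
  by (auto simp: qalg_outcomes_def outcome_prefixes_def)

lemma finite_qalg_outcomes: "finite (qalg_outcomes A)"
  by (simp add: qalg_outcomes_eq finite_outcome_prefixes)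

lemma qalg_prob_eq:
  assumes "xs \<in> qalg_outcomes A"
  shows "qalg_prob A f xs = (cmod (path_amp A f xs))\<^sup>2"
  using assms
  by (simp add: qalg_outcomes_def qalg_prob_def path_amp_def
      prod_norm[symmetric] prod_power_distrib)

lemma qalg_prob_nonneg: "qalg_prob A f xs \<ge> 0"
  by (simp add: qalg_prob_def prod_nonneg)

lemma sum_qalg_prob:
  assumes "valid_qalg D A"
  shows "(\<Sum>xs\<in>qalg_outcomes A. qalg_prob A f xs) = 1"
  using sum_sq_path_amp[OF assms order_refl, of f]
  by (simp add: qalg_prob_eq qalg_outcomes_eq[symmetric])

definition query_mass :: "('d, 'k, 'g) qalg \<Rightarrow> ('d \<Rightarrow> 'k) \<Rightarrow> 'd \<Rightarrow> nat \<Rightarrow> real" where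
  "query_mass A f pos l = (\<Sum>xs\<in>outcome_prefixes A l.
     (cmod (path_amp A f xs))\<^sup>2 * qalg0_query_mass (qalg_comps A ! l) f pos (qalg_b A l xs))"

definition total_query_mass :: "('d, 'k, 'g) qalg \<Rightarrow> ('d \<Rightarrow> 'k) \<Rightarrow> 'd \<Rightarrow> real" where
  "total_query_mass A f pos = (\<Sum>l<length (qalg_comps A). query_mass A f pos l)"

lemma norm_overlap_Suc_sub_le:
  assumes valid: "valid_qalg D A" and l: "l < length (qalg_comps A)"
    and agree: "\<forall>x. x \<noteq> pos \<longrightarrow> f x = g x" and a: "a > 0"
  shows "cmod (overlap A f g (Suc l) - overlap A f g l)
    \<le> a * query_mass A f pos l + query_mass A g pos l / a"
proof -
  define C where "C = qalg_comps A ! l"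
  let ?\<psi> = "\<lambda>h xs. qalg0_state C h (qalg_b A l xs) (qalg0_queries C)"
  have "overlap A f g (Suc l) - overlap A f g l = (\<Sum>xs\<in>outcome_prefixes A l.
      cnj (path_amp A f xs) * path_amp A g xs * (cinner (qalg0_qubits C) (?\<psi> f xs) (?\<psi> g xs) - 1))"
    unfolding overlap_Suc[OF C_def[symmetric]]
    by (simp add: overlap_def algebra_simps sum_subtractf)
  then have "cmod (overlap A f g (Suc l) - overlap A f g l) = cmod (\<Sum>xs\<in>outcome_prefixes A l.
      cnj (path_amp A f xs) * path_amp A g xs * (cinner (qalg0_qubits C) (?\<psi> f xs) (?\<psi> g xs) - 1))"
    by (rule arg_cong)
  also have "\<dots> \<le> (\<Sum>xs\<in>outcome_prefixes A l.
      a * (cmod (path_amp A f xs))\<^sup>2 * qalg0_query_mass C f pos (qalg_b A l xs)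
      + (cmod (path_amp A g xs))\<^sup>2 * qalg0_query_mass C g pos (qalg_b A l xs) / a)"
    using valid_qalgD[OF valid l, folded C_def]
    by (intro order_trans[OF norm_sum sum_mono]
        norm_weighted_cinner_qalg0_state_sub_1_le[OF _ _ agree a])
  also have "\<dots> = a * query_mass A f pos l + query_mass A g pos l / a"
    by (simp add: query_mass_def C_def sum.distrib sum_distrib_left sum_divide_distrib mult.assoc)
  finally show ?thesis .
qed

lemma sum_query_mass_le:
  assumes valid: "valid_qalg D A" and l: "l < length (qalg_comps A)" and "finite S"
  shows "(\<Sum>pos\<in>S. query_mass A f pos l) \<le> real (qalg0_queries (qalg_comps A ! l))"
proof -
  define C where "C = qalg_comps A ! l"
  have "(\<Sum>pos\<in>S. query_mass A f pos l) = (\<Sum>xs\<in>outcome_prefixes A l.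
      (cmod (path_amp A f xs))\<^sup>2 * (\<Sum>pos\<in>S. qalg0_query_mass C f pos (qalg_b A l xs)))"
    unfolding query_mass_def C_def sum_distrib_left by (rule sum.swap)
  also have "\<dots> \<le> (\<Sum>xs\<in>outcome_prefixes A l. (cmod (path_amp A f xs))\<^sup>2 * real (qalg0_queries C))"
    using valid_qalgD[OF valid l, folded C_def]
    by (intro sum_mono mult_left_mono sum_qalg0_query_mass_le assms(3)) auto
  also have "\<dots> = real (qalg0_queries C)"
    using sum_sq_path_amp[OF valid, of l f] l by (simp add: sum_distrib_right[symmetric])
  finally show ?thesis by (simp add: C_def)
qed

lemma norm_overlap_sub_1_le:
  assumes valid: "valid_qalg D A" and agree: "\<forall>x. x \<noteq> pos \<longrightarrow> f x = g x" and a: "a > 0"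
  shows "cmod (overlap A f g (length (qalg_comps A)) - 1)
    \<le> a * total_query_mass A f pos + total_query_mass A g pos / a"
proof -
  have "cmod (overlap A f g l - 1) \<le> (\<Sum>j<l. a * query_mass A f pos j + query_mass A g pos j / a)"
    if "l \<le> length (qalg_comps A)" for l
    using that
  proof (induction l)
    case 0
    then show ?case by (simp add: overlap_0)
  next
    case (Suc l)
    have "cmod (overlap A f g (Suc l) - 1)
        \<le> cmod (overlap A f g (Suc l) - overlap A f g l) + cmod (overlap A f g l - 1)"
      using norm_triangle_ineq[of "overlap A f g (Suc l) - overlap A f g l" "overlap A f g l - 1"]
      by simp
    also have "\<dots> \<le> (a * query_mass A f pos l + query_mass A g pos l / a)
        + (\<Sum>j<l. a * query_mass A f pos j + query_mass A g pos j / a)"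
      using norm_overlap_Suc_sub_le[OF valid _ agree a, of l] Suc by (intro add_mono) auto
    finally show ?case by simp
  qed
  then show ?thesis
    by (simp add: total_query_mass_def sum.distrib sum_distrib_left sum_divide_distrib)
qed

lemma sum_total_query_mass_le:
  assumes "valid_qalg D A" "finite S"
  shows "(\<Sum>pos\<in>S. total_query_mass A f pos) \<le> real (qalg_queries A)"
proof -
  have "(\<Sum>pos\<in>S. total_query_mass A f pos)
      = (\<Sum>l<length (qalg_comps A). \<Sum>pos\<in>S. query_mass A f pos l)"
    unfolding total_query_mass_def by (rule sum.swap)
  also have "\<dots> \<le> (\<Sum>l<length (qalg_comps A). real (qalg0_queries (qalg_comps A ! l)))"
    by (intro sum_mono sum_query_mass_le[OF assms(1) _ assms(2)]) simp
  also have "\<dots> = real (qalg_queries A)"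
    by (simp add: qalg_queries_def)
  finally show ?thesis .
qed

lemma norm_overlap_le_if_distinguished:
  assumes valid: "valid_qalg D A" and G: "G \<subseteq> qalg_outcomes A"
    and f: "(\<Sum>xs\<in>qalg_outcomes A - G. qalg_prob A f xs) \<le> 1/4"
    and g: "(\<Sum>xs\<in>G. qalg_prob A g xs) \<le> 1/4"
  shows "cmod (overlap A f g (length (qalg_comps A))) \<le> 7/8"
proof -
  let ?O = "qalg_outcomes A"
  let ?u = "\<lambda>xs. cmod (path_amp A f xs)" and ?v = "\<lambda>xs. cmod (path_amp A g xs)"
  have split: "sum h ?O = sum h (?O - G) + sum h G" for h :: "nat list \<Rightarrow> real"
    using sum.subset_diff[OF G finite_qalg_outcomes] by simp
  have total_f: "(\<Sum>xs\<in>?O - G. qalg_prob A f xs) + (\<Sum>xs\<in>G. qalg_prob A f xs) = 1"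
    and total_g: "(\<Sum>xs\<in>?O - G. qalg_prob A g xs) + (\<Sum>xs\<in>G. qalg_prob A g xs) = 1"
    using sum_qalg_prob[OF valid] split by metis+
  have "cmod (overlap A f g (length (qalg_comps A))) \<le> (\<Sum>xs\<in>?O. ?u xs * ?v xs)"
    unfolding overlap_def qalg_outcomes_eq[symmetric]
    by (rule order_trans[OF norm_sum]) (simp add: norm_mult)
  also have "\<dots> = (\<Sum>xs\<in>?O - G. ?u xs * ?v xs) + (\<Sum>xs\<in>G. ?u xs * ?v xs)"
    by (rule split)
  also have "\<dots> \<le> (\<Sum>xs\<in>?O - G. qalg_prob A f xs + qalg_prob A g xs / 4)
      + (\<Sum>xs\<in>G. qalg_prob A f xs / 4 + qalg_prob A g xs)"
  proof (intro add_mono sum_mono)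
    fix xs assume "xs \<in> ?O - G"
    then show "?u xs * ?v xs \<le> qalg_prob A f xs + qalg_prob A g xs / 4"
      using mult_le_weighted_am_gm[of 2 "?u xs" "?v xs"] by (simp add: qalg_prob_eq)
  next
    fix xs assume "xs \<in> G"
    then show "?u xs * ?v xs \<le> qalg_prob A f xs / 4 + qalg_prob A g xs"
      using G mult_le_weighted_am_gm[of "1/2" "?u xs" "?v xs"] by (auto simp: qalg_prob_eq)
  qed
  also have "\<dots> \<le> 7/8"
    using f g total_f total_g by (simp add: sum.distrib sum_divide_distrib[symmetric])
  finally show ?thesis .
qed

definition failure_prob ::
    "(('d \<Rightarrow> 'k) \<Rightarrow> 'g::real_normed_vector) \<Rightarrow> ('d, 'k, 'g) qalg \<Rightarrow> ('d \<Rightarrow> 'k) \<Rightarrow> real \<Rightarrow> real" where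
  "failure_prob S A f \<epsilon> =
     (\<Sum>xs\<in>{xs \<in> qalg_outcomes A. norm (S f - qalg_phi A xs) > \<epsilon>}. qalg_prob A f xs)"

lemma qerr_less_imp_failure_prob_le:
  assumes "qerr S A F < ereal r" "f \<in> F"
  shows "\<exists>\<epsilon> < r. failure_prob S A f \<epsilon> \<le> 1/4"
proof -
  have "qerr_f S A f < ereal r"
    using SUP_upper[OF assms(2), of "qerr_f S A"] assms(1) by (simp add: qerr_def)
  then show ?thesis
    unfolding qerr_f_def failure_prob_def Inf_less_iff by auto
qed

lemma sum_qalg_prob_mono:
  assumes "X \<subseteq> Y" "Y \<subseteq> qalg_outcomes A"
  shows "(\<Sum>xs\<in>X. qalg_prob A f xs) \<le> (\<Sum>xs\<in>Y. qalg_prob A f xs)"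
  using assms finite_subset[OF assms(2) finite_qalg_outcomes]
  by (intro sum_mono2) (auto intro: qalg_prob_nonneg)

lemma norm_overlap_le_if_separated:
  fixes S :: "('d \<Rightarrow> 'k) \<Rightarrow> 'g::real_normed_vector"
  assumes valid: "valid_qalg D A" and sep: "2 * r \<le> norm (S g - S f)"
    and f: "\<epsilon>f < r" "failure_prob S A f \<epsilon>f \<le> 1/4"
    and g: "\<epsilon>g < r" "failure_prob S A g \<epsilon>g \<le> 1/4"
  shows "cmod (overlap A f g (length (qalg_comps A))) \<le> 7/8"
proof (rule norm_overlap_le_if_distinguished[OF valid])
  let ?G = "{xs \<in> qalg_outcomes A. norm (S f - qalg_phi A xs) < r}"
  show "?G \<subseteq> qalg_outcomes A" by auto
  have "(\<Sum>xs\<in>qalg_outcomes A - ?G. qalg_prob A f xs)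
      \<le> (\<Sum>xs\<in>{xs \<in> qalg_outcomes A. norm (S f - qalg_phi A xs) > \<epsilon>f}. qalg_prob A f xs)"
    using f(1) by (intro sum_qalg_prob_mono) auto
  then show "(\<Sum>xs\<in>qalg_outcomes A - ?G. qalg_prob A f xs) \<le> 1/4"
    using f(2) unfolding failure_prob_def by linarith
  have "norm (S g - qalg_phi A xs) > \<epsilon>g" if "norm (S f - qalg_phi A xs) < r" for xs
    using norm_triangle_ineq4[of "S g - qalg_phi A xs" "S f - qalg_phi A xs"] sep that g(1)
    by (simp add: norm_minus_commute)
  then have "(\<Sum>xs\<in>?G. qalg_prob A g xs)
      \<le> (\<Sum>xs\<in>{xs \<in> qalg_outcomes A. norm (S g - qalg_phi A xs) > \<epsilon>g}. qalg_prob A g xs)"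
    by (intro sum_qalg_prob_mono) auto
  then show "(\<Sum>xs\<in>?G. qalg_prob A g xs) \<le> 1/4"
    using g(2) unfolding failure_prob_def by linarith
qed

section \<open>The adversary bound\<close>

lemma sum_subsets_insert:
  fixes h :: "'a set \<Rightarrow> 'a \<Rightarrow> 'b::comm_monoid_add"
  assumes "finite U"
  shows "(\<Sum>x\<in>{x. x \<subseteq> U \<and> card x = t}. \<Sum>i\<in>U - x. h (insert i x) i)
       = (\<Sum>y\<in>{y. y \<subseteq> U \<and> card y = Suc t}. \<Sum>i\<in>y. h y i)"
proof -
  let ?X = "{x. x \<subseteq> U \<and> card x = t}" and ?Y = "{y. y \<subseteq> U \<and> card y = Suc t}"
  have fin: "finite ?X" "finite ?Y" "\<And>x. x \<subseteq> U \<Longrightarrow> finite x"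
    using assms by (auto intro: finite_subset[of _ "Pow U"] finite_subset)
  have "(\<Sum>x\<in>?X. \<Sum>i\<in>U - x. h (insert i x) i) = (\<Sum>(x, i)\<in>Sigma ?X (\<lambda>x. U - x). h (insert i x) i)"
    using fin assms by (intro sum.Sigma) auto
  also have "\<dots> = (\<Sum>(y, i)\<in>Sigma ?Y (\<lambda>y. y). h y i)"
  proof (rule sum.reindex_bij_witness
      [where i = "\<lambda>(y, i). (y - {i}, i)" and j = "\<lambda>(x, i). (insert i x, i)"])
    fix a assume "a \<in> Sigma ?X (\<lambda>x. U - x)"
    then obtain x i where a: "a = (x, i)" "x \<subseteq> U" "card x = t" "i \<in> U" "i \<notin> x" by auto
    show "(\<lambda>(y, i). (y - {i}, i)) ((\<lambda>(x, i). (insert i x, i)) a) = a" using a by auto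
    show "(\<lambda>(x, i). (insert i x, i)) a \<in> Sigma ?Y (\<lambda>y. y)" using a fin(3) by auto
    show "(case (\<lambda>(x, i). (insert i x, i)) a of (y, i) \<Rightarrow> h y i)
        = (case a of (x, i) \<Rightarrow> h (insert i x) i)"
      using a by simp
  next
    fix b assume "b \<in> Sigma ?Y (\<lambda>y. y)"
    then obtain y i where b: "b = (y, i)" "y \<subseteq> U" "card y = Suc t" "i \<in> y" by auto
    show "(\<lambda>(x, i). (insert i x, i)) ((\<lambda>(y, i). (y - {i}, i)) b) = b" using b by auto
    show "(\<lambda>(y, i). (y - {i}, i)) b \<in> Sigma ?X (\<lambda>x. U - x)" using b fin(3) by auto
  qed
  also have "\<dots> = (\<Sum>y\<in>?Y. \<Sum>i\<in>y. h y i)"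
    using fin by (intro sum.Sigma[symmetric]) auto
  finally show ?thesis .
qed

lemma card_subsets_Suc:
  assumes "finite U"
  shows "card {x. x \<subseteq> U \<and> card x = t} * (card U - t) = card {y. y \<subseteq> U \<and> card y = Suc t} * Suc t"
  using binomial_absorb_comp[of "card U" t] binomial_absorption[of t "card U"]
  by (simp add: n_subsets[OF assms] mult.commute)

lemma hybrid_tradeoff:
  fixes M T n :: real
  assumes "M > 0" "T > 0" "n > 0"
    and "M / 8 \<le> M / (32 * n) * n + n * M / (T * (M / (32 * n)))"
  shows "3 * (M * T) \<le> 1024 * n\<^sup>2"
proof -
  have "M / 8 \<le> M / 32 + 32 * n\<^sup>2 / T"
    using assms by (simp add: field_simps power2_eq_square)
  then show ?thesis
    using assms(2) by (simp add: field_simps)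
qed

lemma sum_pairs_norm_overlap_sub_1_le:
  assumes valid: "valid_qalg D A" and queries: "qalg_queries A \<le> n" and U: "finite U"
    and agree: "\<And>x i y. y \<noteq> i \<Longrightarrow> F (insert i x) y = F x y" and a: "a > 0"
  shows "(\<Sum>x\<in>{x. x \<subseteq> U \<and> card x = t}. \<Sum>i\<in>U - x.
           cmod (overlap A (F x) (F (insert i x)) (length (qalg_comps A)) - 1))
    \<le> a * real n * real (card {x. x \<subseteq> U \<and> card x = t})
      + real n * real (card {y. y \<subseteq> U \<and> card y = Suc t}) / a"
proof -
  let ?X = "{x. x \<subseteq> U \<and> card x = t}" and ?Y = "{y. y \<subseteq> U \<and> card y = Suc t}"
  let ?mass = "total_query_mass A"
  have mass_le: "(\<Sum>i\<in>I. ?mass f i) \<le> real n" if "finite I" for f I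
    using sum_total_query_mass_le[OF valid that, of f] queries by (simp add: order_trans)
  have "(\<Sum>x\<in>?X. \<Sum>i\<in>U - x. cmod (overlap A (F x) (F (insert i x)) (length (qalg_comps A)) - 1))
      \<le> (\<Sum>x\<in>?X. \<Sum>i\<in>U - x. a * ?mass (F x) i + ?mass (F (insert i x)) i / a)"
    using agree by (intro sum_mono norm_overlap_sub_1_le[OF valid _ a]) auto
  also have "\<dots> = a * (\<Sum>x\<in>?X. \<Sum>i\<in>U - x. ?mass (F x) i) + (\<Sum>y\<in>?Y. \<Sum>i\<in>y. ?mass (F y) i) / a"
    using sum_subsets_insert[OF U, of "\<lambda>y i. ?mass (F y) i / a" t]
    by (simp add: sum.distrib sum_distrib_left sum_divide_distrib)
  also have "\<dots> \<le> a * (\<Sum>x\<in>?X. real n) + (\<Sum>y\<in>?Y. real n) / a"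
    using a U by (intro add_mono mult_left_mono divide_right_mono sum_mono mass_le)
      (auto intro: finite_subset)
  finally show ?thesis
    by (simp add: mult_ac)
qed

lemma adversary_bound:
  assumes valid: "valid_qalg D A" and queries: "qalg_queries A \<le> n" and n: "1 \<le> n"
    and U: "finite U" "t < card U"
    and agree: "\<And>x i y. y \<noteq> i \<Longrightarrow> F (insert i x) y = F x y"
    and far: "\<And>x i. x \<subseteq> U \<Longrightarrow> card x = t \<Longrightarrow> i \<in> U \<Longrightarrow> i \<notin> x \<Longrightarrow>
        cmod (overlap A (F x) (F (insert i x)) (length (qalg_comps A))) \<le> 7/8"
  shows "3 * (real (card U - t) * real (Suc t)) \<le> 1024 * (real n)\<^sup>2"
proof -
  let ?X = "{x. x \<subseteq> U \<and> card x = t}" and ?Y = "{y. y \<subseteq> U \<and> card y = Suc t}"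
  let ?M = "real (card U - t)" and ?k = "length (qalg_comps A)"
  define a where "a = ?M / (32 * real n)"
  have a: "a > 0" using U n by (simp add: a_def)
  obtain x0 where "x0 \<subseteq> U" "card x0 = t"
    using U by (meson obtain_subset_with_card_n less_imp_le)
  then have X: "card ?X > 0"
    using U(1) by (auto simp: card_gt_0_iff intro: finite_subset[of _ "Pow U"])
  have fin: "\<And>x. x \<subseteq> U \<Longrightarrow> finite x" using U(1) finite_subset by blast
  have far': "1/8 \<le> cmod (overlap A (F x) (F (insert i x)) ?k - 1)" if "x \<in> ?X" "i \<in> U - x" for x i
    using far[of x i] that norm_triangle_ineq2[of 1 "overlap A (F x) (F (insert i x)) ?k"]
    by (simp add: norm_minus_commute)
  have "real (card ?X) * (?M / 8) = (\<Sum>x\<in>?X. \<Sum>i\<in>U - x. 1/8)"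
    using fin by (simp add: card_Diff_subset)
  also have "\<dots> \<le> (\<Sum>x\<in>?X. \<Sum>i\<in>U - x. cmod (overlap A (F x) (F (insert i x)) ?k - 1))"
    using far' by (intro sum_mono) auto
  also have "\<dots> \<le> a * real n * real (card ?X) + real n * real (card ?Y) / a"
    by (rule sum_pairs_norm_overlap_sub_1_le[OF valid queries U(1) agree a])
  also have "real (card ?Y) = real (card ?X) * ?M / real (Suc t)"
    using card_subsets_Suc[OF U(1), of t] by (simp add: field_simps flip: of_nat_mult)
  finally have "real (card ?X) * (?M / 8)
      \<le> real (card ?X) * (a * real n + real n * ?M / (real (Suc t) * a))"
    using a by (simp add: field_simps)
  then have "?M / 8 \<le> a * real n + real n * ?M / (real (Suc t) * a)"
    using X by (simp add: mult_le_cancel_left_pos)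
  then show ?thesis
    using hybrid_tradeoff[of ?M "real (Suc t)" "real n"] U n by (simp add: a_def)
qed

lemma min_query_error_ge_if_separated:
  fixes S :: "('d \<Rightarrow> 'k) \<Rightarrow> 'g::real_normed_vector" and F :: "'d set \<Rightarrow> 'd \<Rightarrow> 'k"
  assumes U: "finite U" "t < card U" and n: "1 \<le> n"
    and few_queries: "1024 * (real n)\<^sup>2 < 3 * (real (card U - t) * real (Suc t))"
    and inputs: "\<And>x. x \<subseteq> U \<Longrightarrow> card x = t \<or> card x = Suc t \<Longrightarrow> F x \<in> Fs"
    and agree: "\<And>x i y. y \<noteq> i \<Longrightarrow> F (insert i x) y = F x y"
    and sep: "\<And>x i. x \<subseteq> U \<Longrightarrow> card x = t \<Longrightarrow> i \<in> U \<Longrightarrow> i \<notin> x \<Longrightarrow>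
        2 * r \<le> norm (S (F (insert i x)) - S (F x))"
  shows "ereal r \<le> min_query_error D S Fs n"
  unfolding min_query_error_def
proof (rule INF_greatest)
  fix A :: "('d, 'k, 'g) qalg"
  assume "A \<in> {A. valid_qalg D A \<and> qalg_queries A \<le> n}"
  then have valid: "valid_qalg D A" and queries: "qalg_queries A \<le> n" by auto
  show "ereal r \<le> qerr S A Fs"
  proof (rule ccontr)
    assume "\<not> ereal r \<le> qerr S A Fs"
    then have err: "qerr S A Fs < ereal r" by simp
    have far: "cmod (overlap A (F x) (F (insert i x)) (length (qalg_comps A))) \<le> 7/8"
      if x: "x \<subseteq> U" "card x = t" and i: "i \<in> U" "i \<notin> x" for x i
    proof -
      have "insert i x \<subseteq> U" "card (insert i x) = Suc t"
        using x i finite_subset[OF x(1) U(1)] by auto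
      then have "F x \<in> Fs" "F (insert i x) \<in> Fs"
        using inputs x by auto
      then obtain \<epsilon>f \<epsilon>g where
          "\<epsilon>f < r" "failure_prob S A (F x) \<epsilon>f \<le> 1/4"
          "\<epsilon>g < r" "failure_prob S A (F (insert i x)) \<epsilon>g \<le> 1/4"
        using qerr_less_imp_failure_prob_le[OF err] by meson
      then show ?thesis
        by (rule norm_overlap_le_if_separated[OF valid sep[OF x i]])
    qed
    have "3 * (real (card U - t) * real (Suc t)) \<le> 1024 * (real n)\<^sup>2"
      using adversary_bound[OF valid queries n U(1) U(2), of F] agree far by blast
    then show False
      using few_queries by simp
  qed
qed

lemma sum_scaled_indicator:
  fixes N :: nat
  assumes "x \<subseteq> {..<N}"
  shows "(\<Sum>i<N. c * indicator x i) = real (card x) * (c :: real)"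
proof -
  have "(\<Sum>i<N. c * indicator x i) = (\<Sum>i<N. if i \<in> x then c else 0)"
    by (intro sum.cong) (auto simp: indicator_def)
  also have "\<dots> = (\<Sum>i\<in>{..<N} \<inter> x. c)"
    by (rule sum.inter_restrict[symmetric]) simp
  also have "{..<N} \<inter> x = x"
    using assms by blast
  finally show ?thesis by simp
qed

lemma scaled_indicator_in_Lp_ball:
  assumes p: "1 \<le> p" and x: "x \<subseteq> {..<N}" "card x \<le> k" and pos: "0 < k" "0 < N"
  shows "(\<lambda>i. (real N / real k) powr (1 / p) * indicator x i) \<in> Lp_ball N p"
proof -
  have "(\<Sum>i<N. \<bar>(real N / real k) powr (1 / p) * indicator x i\<bar> powr p)
      = (\<Sum>i<N. (real N / real k) * indicator x i)"
    using p by (intro sum.cong refl) (simp add: indicator_def powr_powr)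
  also have "\<dots> = real (card x) * (real N / real k)"
    by (rule sum_scaled_indicator[OF x(1)])
  finally have "Lp_norm N p (\<lambda>i. (real N / real k) powr (1 / p) * indicator x i)
      = (real (card x) / real k) powr (1 / p)"
    using pos by (simp add: Lp_norm_def)
  also have "\<dots> \<le> 1"
    using x(2) pos p by (intro powr_le1) auto
  finally show ?thesis
    using x(1) by (auto simp: Lp_ball_def indicator_def)
qed

lemma S_mean_scaled_indicator:
  assumes "x \<subseteq> {..<N}"
  shows "S_mean N (\<lambda>i. c * indicator x i) = real (card x) * c / real N"
  unfolding S_mean_def sum_scaled_indicator[OF assms] by simp

lemma summation_query_lower_bound:
  assumes p: "1 \<le> p" and n: "1 \<le> n" and t: "t < N"
    and few_queries: "1024 * (real n)\<^sup>2 < 3 * (real (N - t) * real (Suc t))"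
  shows "ereal ((real N / real (Suc t)) powr (1 / p) / (2 * real N))
    \<le> min_query_error {..<N} (S_mean N) (Lp_ball N p) n"
proof -
  define c where "c = (real N / real (Suc t)) powr (1 / p)"
  show ?thesis
    unfolding c_def[symmetric]
  proof (rule min_query_error_ge_if_separated
      [where U = "{..<N}" and t = t and F = "\<lambda>x i. c * indicator x i"])
    fix x :: "nat set" assume "x \<subseteq> {..<N}" "card x = t \<or> card x = Suc t"
    then show "(\<lambda>i. c * indicator x i) \<in> Lp_ball N p"
      unfolding c_def using p t by (intro scaled_indicator_in_Lp_ball) auto
  next
    fix x :: "nat set" and i assume "x \<subseteq> {..<N}" "card x = t" "i \<in> {..<N}" "i \<notin> x"
    moreover from this have "card (insert i x) = Suc t"
      using finite_subset[of x "{..<N}"] by auto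
    ultimately show "2 * (c / (2 * real N))
        \<le> norm (S_mean N (\<lambda>y. c * indicator (insert i x) y) - S_mean N (\<lambda>y. c * indicator x y))"
      by (simp add: S_mean_scaled_indicator field_simps)
  qed (use n t few_queries in \<open>auto simp: indicator_def\<close>)
qed

lemma hard_level_bounds:
  fixes n N :: nat
  assumes n: "1 \<le> n" and N: "real n \<le> real N / 100"
  defines "t \<equiv> 1000 * n\<^sup>2 div N"
  shows "t < N" and "1024 * (real n)\<^sup>2 < 3 * (real (N - t) * real (Suc t))"
proof -
  have N_pos: "real N > 0" using n N by simp
  have "1000 * n\<^sup>2 < Suc t * N"
    using N_pos unfolding t_def by (simp add: dividend_less_div_times)
  then have t_lo: "1000 * (real n)\<^sup>2 < real (Suc t) * real N"
    by (metis of_nat_less_iff of_nat_mult of_nat_power of_nat_numeral)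
  have "t * N \<le> 1000 * n\<^sup>2"
    unfolding t_def by (rule div_times_less_eq_dividend)
  then have "real t * real N \<le> 1000 * (real n)\<^sup>2"
    by (metis of_nat_le_iff of_nat_mult of_nat_power of_nat_numeral)
  moreover have "1000 * (real n)\<^sup>2 \<le> real N / 10 * real N"
    using power_mono[OF N, of 2] by (simp add: power2_eq_square)
  ultimately have "real t * real N \<le> real N / 10 * real N"
    by linarith
  then have t_small: "real t \<le> real N / 10"
    using N_pos by (rule mult_right_le_imp_le)
  then show "t < N"
    using N_pos by linarith
  then have "real (N - t) \<ge> 9/10 * real N"
    using t_small by (simp add: of_nat_diff)
  then have "real (Suc t) * (9/10 * real N) \<le> real (Suc t) * real (N - t)"
    by (intro mult_left_mono) auto
  then have "9/10 * (real (Suc t) * real N) \<le> real (N - t) * real (Suc t)"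
    by (simp only: mult_ac)
  then show "1024 * (real n)\<^sup>2 < 3 * (real (N - t) * real (Suc t))"
    using t_lo zero_le_power2[of "real n"] by linarith
qed

lemma hard_level_le:
  fixes n N :: nat
  assumes N: "0 < N" "sqrt (real N) \<le> real n"
  shows "real (Suc (1000 * n\<^sup>2 div N)) \<le> 2000 * (real n)\<^sup>2 / real N"
proof -
  have "(sqrt (real N))\<^sup>2 \<le> (real n)\<^sup>2"
    using N(2) by (intro power_mono) auto
  then have "real N \<le> (real n)\<^sup>2"
    by simp
  then have "real N \<le> 1000 * (real n)\<^sup>2"
    using zero_le_power2[of "real n"] by linarith
  then have "1 \<le> 1000 * (real n)\<^sup>2 / real N"
    using N(1) by (simp only: le_divide_eq_1_pos of_nat_0_less_iff)
  moreover have "real (1000 * n\<^sup>2 div N) \<le> 1000 * (real n)\<^sup>2 / real N"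
    using of_nat_div_le_of_nat[of "1000 * n\<^sup>2" N] by simp
  ultimately show ?thesis
    by simp
qed

lemma hard_level_value:
  fixes p T :: real and n N :: nat
  assumes p: "1 \<le> p" and pos: "0 < n" "0 < N" "0 < T" and T: "T \<le> 2000 * (real n)\<^sup>2 / real N"
  shows "1/4000 * real n powr (-2 / p) * real N powr (2 / p - 1)
    \<le> (real N / T) powr (1 / p) / (2 * real N)"
proof -
  define K where "K = (real N / real n) powr (2 / p)"
  have "(real N)\<^sup>2 / (2000 * (real n)\<^sup>2) \<le> real N / T"
    using T pos by (simp add: field_simps power2_eq_square)
  then have "((real N)\<^sup>2 / (2000 * (real n)\<^sup>2)) powr (1 / p) \<le> (real N / T) powr (1 / p)"
    using p pos by (intro powr_mono2) auto
  moreover have square_powr: "(x\<^sup>2) powr (1 / p) = x powr (2 / p)" if "0 < x" for x :: real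
    using that by (simp add: powr_powr flip: powr_numeral)
  have "((real N)\<^sup>2 / (2000 * (real n)\<^sup>2)) powr (1 / p) = K / 2000 powr (1 / p)"
    using pos unfolding K_def by (simp add: powr_divide powr_mult square_powr)
  moreover have "(2000 :: real) powr (1 / p) \<le> 2000 powr 1"
    using p by (intro powr_mono) auto
  then have "K / 2000 \<le> K / 2000 powr (1 / p)"
    unfolding K_def by (intro divide_left_mono) auto
  ultimately have "K / 2000 \<le> (real N / T) powr (1 / p)"
    by linarith
  then have "K / 2000 / (2 * real N) \<le> (real N / T) powr (1 / p) / (2 * real N)"
    by (rule divide_right_mono) simp
  moreover have "1/4000 * real n powr (-2 / p) * real N powr (2 / p - 1) = K / 2000 / (2 * real N)"
    using pos unfolding K_def by (simp add: powr_diff powr_minus_divide powr_divide)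
  ultimately show ?thesis
    by simp
qed

theorem theorem4:
  fixes p :: real
  assumes "1 \<le> p" and "p < 2"
  shows "\<exists>c0 c1 c2 :: real. c0 > 0 \<and> c1 > 0 \<and> c2 > 0 \<and>
    (\<forall>n N :: nat. 1 \<le> n \<and> 1 \<le> N \<and> c0 * sqrt (real N) \<le> real n \<and> real n \<le> c1 * real N \<longrightarrow>
       min_query_error {..<N} (S_mean N) (Lp_ball N p) n
         \<ge> ereal (c2 * real n powr (-2 / p) * real N powr (2 / p - 1)))"
proof (rule exI[of _ 1], rule exI[of _ "1/100"], rule exI[of _ "1/4000"], intro conjI allI impI)
  fix n N :: nat
  assume "1 \<le> n \<and> 1 \<le> N \<and> 1 * sqrt (real N) \<le> real n \<and> real n \<le> 1/100 * real N"
  then have n: "1 \<le> n" and N: "sqrt (real N) \<le> real n" "real n \<le> real N / 100"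
    by auto
  then have N_pos: "0 < N"
    by simp
  define t where "t = 1000 * n\<^sup>2 div N"
  note level = hard_level_bounds[OF n N(2), folded t_def]
  have "ereal (1/4000 * real n powr (-2 / p) * real N powr (2 / p - 1))
      \<le> ereal ((real N / real (Suc t)) powr (1 / p) / (2 * real N))"
    using hard_level_value[OF assms(1) _ N_pos _ hard_level_le[OF N_pos N(1), folded t_def]] n
    by simp
  also have "\<dots> \<le> min_query_error {..<N} (S_mean N) (Lp_ball N p) n"
    by (rule summation_query_lower_bound[OF assms(1) n level(1,2)])
  finally show "min_query_error {..<N} (S_mean N) (Lp_ball N p) n
      \<ge> ereal (1/4000 * real n powr (-2 / p) * real N powr (2 / p - 1))" .
qed simp_all

end
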